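(* Let $H=(V,E)$ be a contextuality scenario with $|E|=m$ and $\max_{e\in E}|e|=d$. Then there is a rule $r$ on the bipartite Bell scenario $B_{2,m,d}$ (two players, each with $m$ measurements having $d$ outcomes each) such that $H$ is a conditional contextuality scenario of the game $(B_{2,m,d})_r$; i.e. $H$ has a $2$-partite conditional interpretation as a game on $B_{2,m,d}$.
   Context: A contextuality scenario is a hypergraph $H=(V,E)$ (finite $V$, $E$ a set of subsets of $V$) with $V=\bigcup_{e\in E}e$. A probabilistic model on $H$ is a function $p:V\to[0,1]$ with $\sum_{v\in e}p(v)=1$ for all $e\in E$; $\mathcal{G}(H)$ denotes the set of such models. For $W\subseteq V$, the induced sub-hypergraph is $H_W=(W,\{e\cap W:e\in E\})$. Conditional contextuality: given hypergraphs $H=(V,E)$ and $H'=(V',E')$, $H'$ is a conditional contextuality scenario of $H$ if there is an injection $\phi:V'\to V$ such that (i) for all $p\in\mathcal{G}(H)$, $p\circ\phi\in\mathcal{G}(H')$, and (ii) for all $p'\in\mathcal{G}(H')$ there exists $p\in\mathcal{G}(H)$ with $p\circ\phi=p'$. Foulis–Randall product: for hypergraphs $H_A=(V_A,E_A)$, $H_B=(V_B,E_B)$, let $E_{A\to B}=\{\bigcup_{a\in e_A}(\{a\}\times f(a)) : e_A\in E_A,\ f:e_A\to E_B\}$ and $E_{A\gets B}=\{\bigcup_{b\in e_B}(g(b)\times\{b\}) : e_B\in E_B,\ g:e_B\to E_A\}$; then $H_A\otimes H_B=(V_A\times V_B,\ E_{A\to B}\cup E_{A\gets B})$. Bipartite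 game: let $B_1=(V_1,E_1)$, $B_2=(V_2,E_2)$ be hypergraphs whose edges are pairwise disjoint and cover the vertex set, and $H=(V,E)=B_1\otimes B_2$. Edges of the form $e_1\times e_2$ with $e_i\in E_i$ are called questions; $Q_E$ is the set of questions. A rule is a function $r:Q_E\to\mathcal{P}(V)$ with $r(e)\subseteq e$ for all $e\in Q_E$. With $W_r=\bigcup_{e\in Q_E}r(e)$, the game on $H$ under rule $r$ is $H_r=H_{W_r}=(W_r,\{e\cap W_r:e\in E\})$. $B_{2,m,d}$ denotes $B\otimes B$ where $B$ is the hypergraph with vertex set $\{x|a: x\in\{1,\dots,m\},\ a\in\{1,\dots,d\}\}$ and the $m$ disjoint edges $\{x|a: a\in\{1,\dots,d\}\}$, $x=1,\dots,m$. A game on $B_{2,m,d}$ is $(B_{2,m,d})_r$ for some rule $r$. *)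

theory Defs
  imports Complex_Main
begin

type_synonym 'v hypergraph = "'v set \<times> 'v set set"

definition verts :: "'v hypergraph \<Rightarrow> 'v set" where
  "verts H = fst H"

definition edges :: "'v hypergraph \<Rightarrow> 'v set set" where
  "edges H = snd H"

definition ctx_scenario :: "'v hypergraph \<Rightarrow> bool" where
  "ctx_scenario H \<longleftrightarrow> finite (verts H) \<and> verts H = \<Union>(edges H)"

definition prob_model :: "'v hypergraph \<Rightarrow> ('v \<Rightarrow> real) \<Rightarrow> bool" where
  "prob_model H p \<longleftrightarrow> (\<forall>v\<in>verts H. 0 \<le> p v \<and> p v \<le> 1) \<and>
                       (\<forall>e\<in>edges H. (\<Sum>v\<in>e. p v) = 1)"

definition induced :: "'v hypergraph \<Rightarrow> 'v set \<Rightarrow> 'v hypergraph" where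
  "induced H W = (W, {e \<inter> W | e. e \<in> edges H})"

definition cond_ctx :: "'w hypergraph \<Rightarrow> 'v hypergraph \<Rightarrow> bool" where
  "cond_ctx H' H \<longleftrightarrow> (\<exists>\<phi> :: 'w \<Rightarrow> 'v.
      inj_on \<phi> (verts H') \<and> \<phi> ` verts H' \<subseteq> verts H \<and>
      (\<forall>p. prob_model H p \<longrightarrow> prob_model H' (p \<circ> \<phi>)) \<and>
      (\<forall>p'. prob_model H' p' \<longrightarrow>
         (\<exists>p. prob_model H p \<and> (\<forall>v\<in>verts H'. p (\<phi> v) = p' v))))"

definition edges_AB :: "'a hypergraph \<Rightarrow> 'b hypergraph \<Rightarrow> ('a \<times> 'b) set set" where
  "edges_AB HA HB = {(\<Union>a\<in>eA. {a} \<times> f a) | eA f.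
       eA \<in> edges HA \<and> (\<forall>a\<in>eA. f a \<in> edges HB)}"

definition edges_BA :: "'a hypergraph \<Rightarrow> 'b hypergraph \<Rightarrow> ('a \<times> 'b) set set" where
  "edges_BA HA HB = {(\<Union>b\<in>eB. g b \<times> {b}) | eB g.
       eB \<in> edges HB \<and> (\<forall>b\<in>eB. g b \<in> edges HA)}"

definition fr_prod :: "'a hypergraph \<Rightarrow> 'b hypergraph \<Rightarrow> ('a \<times> 'b) hypergraph" where
  "fr_prod HA HB = (verts HA \<times> verts HB, edges_AB HA HB \<union> edges_BA HA HB)"

definition questions :: "'a hypergraph \<Rightarrow> 'b hypergraph \<Rightarrow> ('a \<times> 'b) set set" where
  "questions B1 B2 = {e1 \<times> e2 | e1 e2. e1 \<in> edges B1 \<and> e2 \<in> edges B2}"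

definition is_rule :: "'a hypergraph \<Rightarrow> 'b hypergraph \<Rightarrow> (('a \<times> 'b) set \<Rightarrow> ('a \<times> 'b) set) \<Rightarrow> bool" where
  "is_rule B1 B2 r \<longleftrightarrow> (\<forall>e\<in>questions B1 B2. r e \<subseteq> e)"

definition rule_verts :: "'a hypergraph \<Rightarrow> 'b hypergraph \<Rightarrow> (('a \<times> 'b) set \<Rightarrow> ('a \<times> 'b) set) \<Rightarrow> ('a \<times> 'b) set" where
  "rule_verts B1 B2 r = (\<Union>e\<in>questions B1 B2. r e)"

definition game :: "'a hypergraph \<Rightarrow> 'b hypergraph \<Rightarrow> (('a \<times> 'b) set \<Rightarrow> ('a \<times> 'b) set) \<Rightarrow> ('a \<times> 'b) hypergraph" where
  "game B1 B2 r = induced (fr_prod B1 B2) (rule_verts B1 B2 r)"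

text \<open>Single-party hypergraph B: vertices x|a = (x,a), x \<in> {1..m}, a \<in> {1..d}.\<close>
definition party :: "nat \<Rightarrow> nat \<Rightarrow> (nat \<times> nat) hypergraph" where
  "party m d = ({1..m} \<times> {1..d}, {{x} \<times> {1..d} | x. x \<in> {1..m}})"

definition bell_game :: "nat \<Rightarrow> nat \<Rightarrow> (((nat \<times> nat) \<times> (nat \<times> nat)) set \<Rightarrow> ((nat \<times> nat) \<times> (nat \<times> nat)) set) \<Rightarrow> ((nat \<times> nat) \<times> (nat \<times> nat)) hypergraph" where
  "bell_game m d r = game (party m d) (party m d) r"

end

theory Submission
  imports Defs
begin

(*
  Enumerate the edges e_1, ..., e_m of H and label the vertices of each e_x injectively by the
  outcomes 1..d.  On question (x, y) the rule allows exactly the answer pairs (u, v) in e_x * e_y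
  with u = v whenever u or v lies in both edges.  Every probabilistic model p of the game is
  no-signalling, which forces the diagonal weight p(u, u) on question (x, x) not to depend on the
  edge e_x containing u; so u |-> p(u, u) is a model of H.  Conversely a model q of H extends to
  the game by p(u, u) = q(u) and p(u, v) = q(u) q(v) / (1 - q(e_x \<inter> e_y)) for u \<noteq> v, whose
  marginals are q on both sides.
*)

lemma verts_induced [simp]: "verts (induced H W) = W"
  by (simp add: induced_def verts_def)

lemma edges_induced: "edges (induced H W) = (\<lambda>e. e \<inter> W) ` edges H"
  by (auto simp: induced_def edges_def)

lemma edges_fr_prod: "edges (fr_prod A B) = edges_AB A B \<union> edges_BA A B"
  by (simp add: fr_prod_def edges_def)

lemma prob_model_induced_iff:
  "prob_model (induced H W) p \<longleftrightarrow>
     (\<forall>w\<in>W. 0 \<le> p w \<and> p w \<le> 1) \<and> (\<forall>e\<in>edges H. sum p (e \<inter> W) = 1)"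
  by (auto simp: prob_model_def edges_induced)

lemma edges_ABI:
  "eA \<in> edges A \<Longrightarrow> (\<And>a. a \<in> eA \<Longrightarrow> f a \<in> edges B) \<Longrightarrow> (\<Union>a\<in>eA. {a} \<times> f a) \<in> edges_AB A B"
  unfolding edges_AB_def by blast

lemma edges_BAI:
  "eB \<in> edges B \<Longrightarrow> (\<And>b. b \<in> eB \<Longrightarrow> g b \<in> edges A) \<Longrightarrow> (\<Union>b\<in>eB. g b \<times> {b}) \<in> edges_BA A B"
  unfolding edges_BA_def by blast

lemma Times_in_edges_AB: "eA \<in> edges A \<Longrightarrow> eB \<in> edges B \<Longrightarrow> eA \<times> eB \<in> edges_AB A B"
  using edges_ABI[of eA A "\<lambda>_. eB" B] by (simp add: Sigma_def)

lemma is_rule_Int: "is_rule B1 B2 (\<lambda>Q. Q \<inter> W)"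
  by (simp add: is_rule_def)

lemma game_Int:
  assumes "W \<subseteq> \<Union>(questions B1 B2)"
  shows "game B1 B2 (\<lambda>Q. Q \<inter> W) = induced (fr_prod B1 B2) W"
proof -
  have "rule_verts B1 B2 (\<lambda>Q. Q \<inter> W) = W"
    using assms by (auto simp: rule_verts_def)
  then show ?thesis by (simp add: game_def)
qed

lemma no_signalling_left:
  assumes p: "prob_model (induced (fr_prod A B) W) p" and W: "finite W"
    and a: "eA \<in> edges A" "a \<in> eA" and eB: "eB \<in> edges B" "eB' \<in> edges B"
  shows "sum p (({a} \<times> eB) \<inter> W) = sum p (({a} \<times> eB') \<inter> W)"
proof -
  define e1 where "e1 = (\<Union>a'\<in>eA. {a'} \<times> (if a' = a then eB else eB'))"
  define e2 where "e2 = (\<Union>a'\<in>eA. {a'} \<times> eB')"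
  define rest where "rest = ((eA - {a}) \<times> eB') \<inter> W"
  have "e1 \<in> edges_AB A B" "e2 \<in> edges_AB A B"
    using a eB by (auto simp: e1_def e2_def intro!: edges_ABI)
  then have "sum p (e1 \<inter> W) = 1" "sum p (e2 \<inter> W) = 1"
    using p by (simp_all add: prob_model_induced_iff edges_fr_prod)
  moreover have "e1 \<inter> W = ({a} \<times> eB) \<inter> W \<union> rest" "e2 \<inter> W = ({a} \<times> eB') \<inter> W \<union> rest"
    using a(2) by (auto simp: e1_def e2_def rest_def split: if_splits)
  ultimately have "sum p (({a} \<times> eB) \<inter> W \<union> rest) = sum p (({a} \<times> eB') \<inter> W \<union> rest)"
    by simp
  then show ?thesis
    using W by (simp add: sum.union_disjoint rest_def Int_Un_distrib2 disjoint_iff)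
qed

lemma no_signalling_right:
  assumes p: "prob_model (induced (fr_prod A B) W) p" and W: "finite W"
    and b: "eB \<in> edges B" "b \<in> eB" and eA: "eA \<in> edges A" "eA' \<in> edges A"
  shows "sum p ((eA \<times> {b}) \<inter> W) = sum p ((eA' \<times> {b}) \<inter> W)"
proof -
  define e1 where "e1 = (\<Union>b'\<in>eB. (if b' = b then eA else eA') \<times> {b'})"
  define e2 where "e2 = (\<Union>b'\<in>eB. eA' \<times> {b'})"
  define rest where "rest = (eA' \<times> (eB - {b})) \<inter> W"
  have "e1 \<in> edges_BA A B" "e2 \<in> edges_BA A B"
    using b eA by (auto simp: e1_def e2_def intro!: edges_BAI)
  then have "sum p (e1 \<inter> W) = 1" "sum p (e2 \<inter> W) = 1"
    using p by (simp_all add: prob_model_induced_iff edges_fr_prod)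
  moreover have "e1 \<inter> W = (eA \<times> {b}) \<inter> W \<union> rest" "e2 \<inter> W = (eA' \<times> {b}) \<inter> W \<union> rest"
    using b(2) by (auto simp: e1_def e2_def rest_def split: if_splits)
  ultimately have "sum p ((eA \<times> {b}) \<inter> W \<union> rest) = sum p ((eA' \<times> {b}) \<inter> W \<union> rest)"
    by simp
  then show ?thesis
    using W by (simp add: sum.union_disjoint rest_def Int_Un_distrib2 disjoint_iff)
qed

lemma prob_model_induced_fr_prodI:
  assumes W: "finite W" and bounds: "\<And>w. w \<in> W \<Longrightarrow> 0 \<le> p w \<and> p w \<le> 1"
    and left: "\<And>eA a eB. eA \<in> edges A \<Longrightarrow> a \<in> eA \<Longrightarrow> eB \<in> edges B \<Longrightarrow>
                 sum p (({a} \<times> eB) \<inter> W) = \<mu>A a"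
    and left_total: "\<And>eA. eA \<in> edges A \<Longrightarrow> sum \<mu>A eA = 1"
    and right: "\<And>eB b eA. eB \<in> edges B \<Longrightarrow> b \<in> eB \<Longrightarrow> eA \<in> edges A \<Longrightarrow>
                 sum p ((eA \<times> {b}) \<inter> W) = \<mu>B b"
    and right_total: "\<And>eB. eB \<in> edges B \<Longrightarrow> sum \<mu>B eB = 1"
  shows "prob_model (induced (fr_prod A B) W) p"
  unfolding prob_model_induced_iff edges_fr_prod
proof (intro conjI ballI)
  show "0 \<le> p w" "p w \<le> 1" if "w \<in> W" for w
    using bounds[OF that] by auto
next
  fix e assume "e \<in> edges_AB A B \<union> edges_BA A B"
  then show "sum p (e \<inter> W) = 1"
  proof
    assume "e \<in> edges_AB A B"
    then obtain eA f where eA: "eA \<in> edges A" "\<forall>a\<in>eA. f a \<in> edges B"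
      and e: "e = (\<Union>a\<in>eA. {a} \<times> f a)"
      unfolding edges_AB_def by blast
    have "finite eA" using left_total[OF eA(1)] by (metis sum.infinite zero_neq_one)
    moreover have "e \<inter> W = (\<Union>a\<in>eA. ({a} \<times> f a) \<inter> W)" using e by blast
    ultimately have "sum p (e \<inter> W) = (\<Sum>a\<in>eA. sum p (({a} \<times> f a) \<inter> W))"
      using W by (simp only:) (intro sum.UNION_disjoint, auto)
    also have "\<dots> = sum \<mu>A eA" using eA by (intro sum.cong refl left) auto
    finally show ?thesis using left_total[OF eA(1)] by simp
  next
    assume "e \<in> edges_BA A B"
    then obtain eB g where eB: "eB \<in> edges B" "\<forall>b\<in>eB. g b \<in> edges A"
      and e: "e = (\<Union>b\<in>eB. g b \<times> {b})"
      unfolding edges_BA_def by blast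
    have "finite eB" using right_total[OF eB(1)] by (metis sum.infinite zero_neq_one)
    moreover have "e \<inter> W = (\<Union>b\<in>eB. (g b \<times> {b}) \<inter> W)" using e by blast
    ultimately have "sum p (e \<inter> W) = (\<Sum>b\<in>eB. sum p ((g b \<times> {b}) \<inter> W))"
      using W by (simp only:) (intro sum.UNION_disjoint, auto)
    also have "\<dots> = sum \<mu>B eB" using eB by (intro sum.cong refl right) auto
    finally show ?thesis using right_total[OF eB(1)] by simp
  qed
qed


locale edge_labelling =
  fixes H :: "'v hypergraph" and m d :: nat
    and edge :: "nat \<Rightarrow> 'v set" and label :: "nat \<Rightarrow> 'v \<Rightarrow> nat"
  assumes scenario: "ctx_scenario H"
    and edges_enum: "edges H = edge ` {1..m}"
    and label_inj: "x \<in> {1..m} \<Longrightarrow> inj_on (label x) (edge x)"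
    and label_range: "x \<in> {1..m} \<Longrightarrow> u \<in> edge x \<Longrightarrow> label x u \<in> {1..d}"
begin

lemma edge_subset_verts: "x \<in> {1..m} \<Longrightarrow> edge x \<subseteq> verts H"
  using scenario edges_enum by (auto simp: ctx_scenario_def)

lemma finite_edge: "x \<in> {1..m} \<Longrightarrow> finite (edge x)"
  using edge_subset_verts scenario by (meson ctx_scenario_def finite_subset)

lemma verts_covered: "v \<in> verts H \<Longrightarrow> \<exists>x\<in>{1..m}. v \<in> edge x"
  using scenario edges_enum by (auto simp: ctx_scenario_def)

definition outcomes :: "nat \<Rightarrow> (nat \<times> nat) set" where
  "outcomes x = {x} \<times> {1..d}"

definition answers :: "nat \<Rightarrow> 'v \<Rightarrow> nat \<Rightarrow> 'v \<Rightarrow> (nat \<times> nat) \<times> (nat \<times> nat)" where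
  "answers x u y v = ((x, label x u), (y, label y v))"

definition consistent :: "nat \<Rightarrow> nat \<Rightarrow> 'v \<Rightarrow> 'v \<Rightarrow> bool" where
  "consistent x y u v \<longleftrightarrow> (u \<in> edge y \<or> v \<in> edge x \<longrightarrow> u = v)"

definition allowed :: "((nat \<times> nat) \<times> (nat \<times> nat)) set" where
  "allowed = {answers x u y v | x u y v.
     x \<in> {1..m} \<and> y \<in> {1..m} \<and> u \<in> edge x \<and> v \<in> edge y \<and> consistent x y u v}"

definition game_rule where
  "game_rule = (\<lambda>Q. Q \<inter> allowed)"

lemma consistent_sym: "consistent x y u v \<longleftrightarrow> consistent y x v u"
  by (auto simp: consistent_def)

lemma edges_party: "edges (party m d) = outcomes ` {1..m}"
  by (auto simp: party_def edges_def outcomes_def)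

lemma answers_in_outcomes:
  "x \<in> {1..m} \<Longrightarrow> y \<in> {1..m} \<Longrightarrow> u \<in> edge x \<Longrightarrow> v \<in> edge y \<Longrightarrow> answers x u y v \<in> outcomes x \<times> outcomes y"
  unfolding answers_def outcomes_def using label_range by blast

lemma allowedI:
  "x \<in> {1..m} \<Longrightarrow> y \<in> {1..m} \<Longrightarrow> u \<in> edge x \<Longrightarrow> v \<in> edge y \<Longrightarrow> consistent x y u v \<Longrightarrow>
   answers x u y v \<in> allowed"
  unfolding allowed_def by blast

lemma allowedE:
  assumes "w \<in> allowed"
  obtains x u y v where "w = answers x u y v" "x \<in> {1..m}" "y \<in> {1..m}" "u \<in> edge x" "v \<in> edge y"
    "consistent x y u v"
  using assms unfolding allowed_def by blast

lemma allowed_subset_questions: "allowed \<subseteq> \<Union>(questions (party m d) (party m d))"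
proof
  fix w assume "w \<in> allowed"
  then obtain x u y v where "w = answers x u y v" "x \<in> {1..m}" "y \<in> {1..m}" "u \<in> edge x" "v \<in> edge y"
    by (rule allowedE)
  moreover have "outcomes x \<times> outcomes y \<in> questions (party m d) (party m d)"
    if "x \<in> {1..m}" "y \<in> {1..m}" for x y
    using that unfolding questions_def edges_party by blast
  ultimately show "w \<in> \<Union>(questions (party m d) (party m d))"
    using answers_in_outcomes by blast
qed

lemma finite_allowed: "finite allowed"
proof (rule finite_subset)
  show "allowed \<subseteq> ({1..m} \<times> {1..d}) \<times> ({1..m} \<times> {1..d})"
  proof
    fix w assume "w \<in> allowed"
    then obtain x u y v where "w = answers x u y v" "x \<in> {1..m}" "y \<in> {1..m}" "u \<in> edge x" "v \<in> edge y"
      by (rule allowedE)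
    then show "w \<in> ({1..m} \<times> {1..d}) \<times> ({1..m} \<times> {1..d})"
      using label_range[of x u] label_range[of y v] by (simp add: answers_def)
  qed
qed simp

lemma bell_game_eq: "bell_game m d game_rule = induced (fr_prod (party m d) (party m d)) allowed"
  unfolding bell_game_def game_rule_def using allowed_subset_questions by (rule game_Int)

lemma label_eq_iff: "x \<in> {1..m} \<Longrightarrow> u \<in> edge x \<Longrightarrow> v \<in> edge x \<Longrightarrow> label x u = label x v \<longleftrightarrow> u = v"
  using label_inj by (auto dest: inj_onD)

lemma row_allowed:
  assumes x: "x \<in> {1..m}" and y: "y \<in> {1..m}" and u: "u \<in> edge x"
  shows "({(x, label x u)} \<times> outcomes y) \<inter> allowed = answers x u y ` {v \<in> edge y. consistent x y u v}"
proof
  show "answers x u y ` {v \<in> edge y. consistent x y u v} \<subseteq> ({(x, label x u)} \<times> outcomes y) \<inter> allowed"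
    using answers_in_outcomes[OF x y u] allowedI[OF x y u] by (auto simp: answers_def)
  show "({(x, label x u)} \<times> outcomes y) \<inter> allowed \<subseteq> answers x u y ` {v \<in> edge y. consistent x y u v}"
  proof
    fix w assume w: "w \<in> ({(x, label x u)} \<times> outcomes y) \<inter> allowed"
    then obtain x' u' y' v where w': "w = answers x' u' y' v" "x' \<in> {1..m}" "y' \<in> {1..m}"
      "u' \<in> edge x'" "v \<in> edge y'" "consistent x' y' u' v"
      by (blast elim: allowedE)
    with w have "x' = x" "y' = y" "label x u' = label x u" by (auto simp: answers_def outcomes_def)
    with w' x u have "u' = u" by (simp add: label_eq_iff)
    with w' \<open>x' = x\<close> \<open>y' = y\<close> show "w \<in> answers x u y ` {v \<in> edge y. consistent x y u v}" by blast
  qed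
qed

lemma col_allowed:
  assumes x: "x \<in> {1..m}" and y: "y \<in> {1..m}" and v: "v \<in> edge y"
  shows "(outcomes x \<times> {(y, label y v)}) \<inter> allowed = (\<lambda>u. answers x u y v) ` {u \<in> edge x. consistent x y u v}"
proof
  show "(\<lambda>u. answers x u y v) ` {u \<in> edge x. consistent x y u v} \<subseteq> (outcomes x \<times> {(y, label y v)}) \<inter> allowed"
    using answers_in_outcomes[OF x y _ v] allowedI[OF x y _ v] by (auto simp: answers_def)
  show "(outcomes x \<times> {(y, label y v)}) \<inter> allowed \<subseteq> (\<lambda>u. answers x u y v) ` {u \<in> edge x. consistent x y u v}"
  proof
    fix w assume w: "w \<in> (outcomes x \<times> {(y, label y v)}) \<inter> allowed"
    then obtain x' u y' v' where w': "w = answers x' u y' v'" "x' \<in> {1..m}" "y' \<in> {1..m}"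
      "u \<in> edge x'" "v' \<in> edge y'" "consistent x' y' u v'"
      by (blast elim: allowedE)
    with w have "x' = x" "y' = y" "label y v' = label y v" by (auto simp: answers_def outcomes_def)
    with w' y v have "v' = v" by (simp add: label_eq_iff)
    with w' \<open>x' = x\<close> \<open>y' = y\<close> show "w \<in> (\<lambda>u. answers x u y v) ` {u \<in> edge x. consistent x y u v}" by blast
  qed
qed

lemma diag_allowed:
  assumes x: "x \<in> {1..m}"
  shows "(outcomes x \<times> outcomes x) \<inter> allowed = (\<lambda>v. answers x v x v) ` edge x"
proof
  show "(\<lambda>v. answers x v x v) ` edge x \<subseteq> (outcomes x \<times> outcomes x) \<inter> allowed"
  proof (rule image_subsetI)
    fix v assume "v \<in> edge x"
    then show "answers x v x v \<in> (outcomes x \<times> outcomes x) \<inter> allowed"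
      using answers_in_outcomes[OF x x] allowedI[OF x x] by (simp add: consistent_def)
  qed
  show "(outcomes x \<times> outcomes x) \<inter> allowed \<subseteq> (\<lambda>v. answers x v x v) ` edge x"
  proof
    fix w assume w: "w \<in> (outcomes x \<times> outcomes x) \<inter> allowed"
    then obtain x' u y' v where w': "w = answers x' u y' v" "u \<in> edge x'" "v \<in> edge y'" "consistent x' y' u v"
      by (blast elim: allowedE)
    with w have "x' = x" "y' = x" by (auto simp: answers_def outcomes_def)
    with w' show "w \<in> (\<lambda>v. answers x v x v) ` edge x" by (auto simp: consistent_def)
  qed
qed

lemma is_rule_game_rule: "is_rule (party m d) (party m d) game_rule"
  unfolding game_rule_def by (rule is_rule_Int)

lemma inj_on_answers_right: "y \<in> {1..m} \<Longrightarrow> inj_on (answers x u y) (edge y)"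
  by (auto intro!: inj_onI simp: answers_def label_eq_iff)

lemma inj_on_answers_left: "x \<in> {1..m} \<Longrightarrow> inj_on (\<lambda>u. answers x u y v) (edge x)"
  by (auto intro!: inj_onI simp: answers_def label_eq_iff)

lemma inj_on_answers_diag: "x \<in> {1..m} \<Longrightarrow> inj_on (\<lambda>v. answers x v x v) (edge x)"
  by (auto intro!: inj_onI simp: answers_def label_eq_iff)

lemma consistent_shared_right: "u \<in> edge y \<Longrightarrow> {v \<in> edge y. consistent x y u v} = {u}"
  by (auto simp: consistent_def)

lemma consistent_shared_left: "v \<in> edge x \<Longrightarrow> {u \<in> edge x. consistent x y u v} = {v}"
  by (auto simp: consistent_def)

(* On question (x, y) the only allowed pair in which either party answers the shared vertex v
   is (v, v), so no-signalling on each side carries the weight from (x, x) to (y, y). *)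
lemma diag_weight_eq:
  assumes p: "prob_model (bell_game m d game_rule) p"
    and xy: "x \<in> {1..m}" "y \<in> {1..m}" and v: "v \<in> edge x" "v \<in> edge y"
  shows "p (answers x v x v) = p (answers y v y v)"
proof -
  have p': "prob_model (induced (fr_prod (party m d) (party m d)) allowed) p"
    using p by (simp add: bell_game_eq)
  have out: "outcomes x \<in> edges (party m d)" "outcomes y \<in> edges (party m d)"
    using xy by (simp_all add: edges_party)
  have lab: "(x, label x v) \<in> outcomes x" "(y, label y v) \<in> outcomes y"
    using xy v label_range by (auto simp: outcomes_def)
  have "p (answers x v x v) = sum p (({(x, label x v)} \<times> outcomes x) \<inter> allowed)"
    using row_allowed[OF xy(1) xy(1) v(1)] consistent_shared_right[OF v(1)] by simp
  also have "\<dots> = sum p (({(x, label x v)} \<times> outcomes y) \<inter> allowed)"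
    using p' finite_allowed out(1) lab(1) out by (rule no_signalling_left)
  also have "\<dots> = p (answers x v y v)"
    using row_allowed[OF xy(1) xy(2) v(1)] consistent_shared_right[OF v(2)] by simp
  also have "\<dots> = sum p ((outcomes x \<times> {(y, label y v)}) \<inter> allowed)"
    using col_allowed[OF xy v(2)] consistent_shared_left[OF v(1)] by simp
  also have "\<dots> = sum p ((outcomes y \<times> {(y, label y v)}) \<inter> allowed)"
    using p' finite_allowed out(2) lab(2) out by (rule no_signalling_right)
  also have "\<dots> = p (answers y v y v)"
    using col_allowed[OF xy(2) xy(2) v(2)] consistent_shared_left[OF v(2)] by simp
  finally show ?thesis .
qed

definition edge_of :: "'v \<Rightarrow> nat" where
  "edge_of v = (SOME x. x \<in> {1..m} \<and> v \<in> edge x)"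

definition embedding :: "'v \<Rightarrow> (nat \<times> nat) \<times> (nat \<times> nat)" where
  "embedding v = answers (edge_of v) v (edge_of v) v"

lemma edge_of: "v \<in> verts H \<Longrightarrow> edge_of v \<in> {1..m} \<and> v \<in> edge (edge_of v)"
  unfolding edge_of_def by (rule someI_ex) (use verts_covered in blast)

lemma embedding_allowed: "v \<in> verts H \<Longrightarrow> embedding v \<in> allowed"
  using edge_of by (fastforce simp: allowed_def embedding_def consistent_def)

lemma inj_on_embedding: "inj_on embedding (verts H)"
proof
  fix u v assume uv: "u \<in> verts H" "v \<in> verts H" "embedding u = embedding v"
  then have "edge_of u = edge_of v" "label (edge_of v) u = label (edge_of v) v"
    by (auto simp: embedding_def answers_def)
  then show "u = v" using edge_of[OF uv(1)] edge_of[OF uv(2)] by (simp add: label_eq_iff)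
qed

lemma prob_model_comp_embedding:
  assumes p: "prob_model (bell_game m d game_rule) p"
  shows "prob_model H (p \<circ> embedding)"
  unfolding prob_model_def
proof (intro conjI ballI)
  fix v assume "v \<in> verts H"
  then show "0 \<le> (p \<circ> embedding) v" "(p \<circ> embedding) v \<le> 1"
    using p embedding_allowed by (auto simp: bell_game_eq prob_model_induced_iff)
next
  fix e assume "e \<in> edges H"
  then obtain x where x: "x \<in> {1..m}" and e: "e = edge x" using edges_enum by auto
  have "outcomes x \<times> outcomes x \<in> edges_AB (party m d) (party m d)"
    using x by (simp add: Times_in_edges_AB edges_party)
  then have "sum p ((outcomes x \<times> outcomes x) \<inter> allowed) = 1"
    using p by (simp add: bell_game_eq prob_model_induced_iff edges_fr_prod)
  then have "(\<Sum>v\<in>edge x. p (answers x v x v)) = 1"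
    by (simp add: diag_allowed[OF x] sum.reindex[OF inj_on_answers_diag[OF x]])
  moreover have "p (answers x v x v) = (p \<circ> embedding) v" if "v \<in> edge x" for v
    using diag_weight_eq[OF p x] edge_of edge_subset_verts[OF x] that by (auto simp: embedding_def)
  ultimately show "sum (p \<circ> embedding) e = 1" unfolding e by simp
qed

context
  fixes q :: "'v \<Rightarrow> real"
  assumes q: "prob_model H q"
begin

lemma q_nonneg: "x \<in> {1..m} \<Longrightarrow> u \<in> edge x \<Longrightarrow> 0 \<le> q u"
  using q edge_subset_verts by (auto simp: prob_model_def)

lemma q_le_one: "x \<in> {1..m} \<Longrightarrow> u \<in> edge x \<Longrightarrow> q u \<le> 1"
  using q edge_subset_verts by (auto simp: prob_model_def)

lemma sum_q_edge: "x \<in> {1..m} \<Longrightarrow> sum q (edge x) = 1"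
  using q edges_enum by (auto simp: prob_model_def)

definition overlap :: "nat \<Rightarrow> nat \<Rightarrow> real" where
  "overlap x y = sum q (edge x \<inter> edge y)"

(* If q(e_x \<inter> e_y) = 1 then q vanishes on e_x - e_y, so the junk quotient by 0 is harmless. *)
definition joint :: "nat \<Rightarrow> nat \<Rightarrow> 'v \<Rightarrow> 'v \<Rightarrow> real" where
  "joint x y u v = (if u = v then q u else q u * q v / (1 - overlap x y))"

definition extension :: "(nat \<times> nat) \<times> (nat \<times> nat) \<Rightarrow> real" where
  "extension = (\<lambda>((x, \<alpha>), (y, \<beta>)).
     joint x y (inv_into (edge x) (label x) \<alpha>) (inv_into (edge y) (label y) \<beta>))"

definition marginal :: "nat \<times> nat \<Rightarrow> real" where
  "marginal = (\<lambda>(x, \<alpha>). if \<alpha> \<in> label x ` edge x then q (inv_into (edge x) (label x) \<alpha>) else 0)"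

lemma joint_sym: "joint x y u v = joint y x v u"
  by (simp add: joint_def overlap_def Int_commute mult.commute)

lemma q_le_one_minus_overlap:
  assumes x: "x \<in> {1..m}" and u: "u \<in> edge x" "u \<notin> edge y"
  shows "q u \<le> 1 - overlap x y"
proof -
  have "q u + overlap x y = sum q (insert u (edge x \<inter> edge y))"
    using u finite_edge[OF x] by (simp add: overlap_def)
  also have "\<dots> \<le> sum q (edge x)"
    using u finite_edge[OF x] q_nonneg[OF x] by (intro sum_mono2) auto
  finally show ?thesis using sum_q_edge[OF x] by simp
qed

lemma joint_nonneg_le_one:
  assumes x: "x \<in> {1..m}" and y: "y \<in> {1..m}" and uv: "u \<in> edge x" "v \<in> edge y"
    and c: "consistent x y u v"
  shows "0 \<le> joint x y u v \<and> joint x y u v \<le> 1"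
proof (cases "u = v")
  case True
  then show ?thesis using q_nonneg[OF x uv(1)] q_le_one[OF x uv(1)] by (simp add: joint_def)
next
  case False
  then have "u \<notin> edge y" using c by (simp add: consistent_def)
  then have le: "q u \<le> 1 - overlap x y" using q_le_one_minus_overlap[OF x uv(1)] by blast
  have qu: "0 \<le> q u" and qv: "0 \<le> q v" "q v \<le> 1"
    using q_nonneg[OF x uv(1)] q_nonneg[OF y uv(2)] q_le_one[OF y uv(2)] by auto
  have "q u * q v \<le> 1 - overlap x y" using le qu qv by (meson mult_left_le order_trans)
  moreover have "0 \<le> 1 - overlap x y" using le qu by linarith
  ultimately have "q u * q v / (1 - overlap x y) \<le> 1"
    by (cases "1 - overlap x y = 0") (simp_all add: divide_le_eq_1_pos)
  then show ?thesis
    using False qu qv \<open>0 \<le> 1 - overlap x y\<close> by (simp add: joint_def)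
qed

lemma joint_row_sum:
  assumes x: "x \<in> {1..m}" and y: "y \<in> {1..m}" and u: "u \<in> edge x"
  shows "sum (joint x y u) {v \<in> edge y. consistent x y u v} = q u"
proof (cases "u \<in> edge y")
  case True
  then show ?thesis by (simp add: consistent_shared_right joint_def)
next
  case False
  then have S: "{v \<in> edge y. consistent x y u v} = edge y - edge x"
    using u by (auto simp: consistent_def)
  have rest: "sum q (edge y - edge x) = 1 - overlap x y"
  proof -
    have "edge y - edge x = edge y - (edge x \<inter> edge y)" by blast
    then show ?thesis
      using finite_edge[OF y] sum_q_edge[OF y] by (simp add: sum_diff overlap_def)
  qed
  have "sum (joint x y u) (edge y - edge x) = (\<Sum>v\<in>edge y - edge x. q u * q v / (1 - overlap x y))"
    using False by (intro sum.cong) (auto simp: joint_def)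
  also have "\<dots> = q u * (1 - overlap x y) / (1 - overlap x y)"
    by (simp add: rest flip: sum_divide_distrib sum_distrib_left)
  also have "\<dots> = q u"
    using q_le_one_minus_overlap[OF x u False] q_nonneg[OF x u] by (cases "overlap x y = 1") auto
  finally show ?thesis using S by simp
qed

lemma extension_answers:
  "x \<in> {1..m} \<Longrightarrow> y \<in> {1..m} \<Longrightarrow> u \<in> edge x \<Longrightarrow> v \<in> edge y \<Longrightarrow>
   extension (answers x u y v) = joint x y u v"
  by (simp add: extension_def answers_def inv_into_f_f label_inj)

lemma marginal_label: "x \<in> {1..m} \<Longrightarrow> u \<in> edge x \<Longrightarrow> marginal (x, label x u) = q u"
  by (simp add: marginal_def inv_into_f_f label_inj)

lemma marginal_unlabelled: "\<alpha> \<notin> label x ` edge x \<Longrightarrow> marginal (x, \<alpha>) = 0"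
  by (simp add: marginal_def)

lemma extension_row_sum:
  assumes x: "x \<in> {1..m}" and y: "y \<in> {1..m}"
  shows "sum extension (({(x, \<alpha>)} \<times> outcomes y) \<inter> allowed) = marginal (x, \<alpha>)"
proof (cases "\<alpha> \<in> label x ` edge x")
  case True
  then obtain u where u: "u \<in> edge x" and \<alpha>: "\<alpha> = label x u" by blast
  have "sum extension (({(x, \<alpha>)} \<times> outcomes y) \<inter> allowed)
      = sum (extension \<circ> answers x u y) {v \<in> edge y. consistent x y u v}"
    unfolding \<alpha> row_allowed[OF x y u]
    by (rule sum.reindex, rule inj_on_subset[OF inj_on_answers_right[OF y]]) blast
  also have "\<dots> = sum (joint x y u) {v \<in> edge y. consistent x y u v}"
    using extension_answers[OF x y u] by (intro sum.cong) auto
  finally show ?thesis using joint_row_sum[OF x y u] marginal_label[OF x u] \<alpha> by simp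
next
  case False
  have "fst w \<noteq> (x, \<alpha>)" if "w \<in> allowed" for w
    using that False by (auto simp: answers_def elim!: allowedE)
  then have "({(x, \<alpha>)} \<times> outcomes y) \<inter> allowed = {}" by fastforce
  then show ?thesis using marginal_unlabelled[OF False] by simp
qed

lemma extension_col_sum:
  assumes x: "x \<in> {1..m}" and y: "y \<in> {1..m}"
  shows "sum extension ((outcomes x \<times> {(y, \<beta>)}) \<inter> allowed) = marginal (y, \<beta>)"
proof (cases "\<beta> \<in> label y ` edge y")
  case True
  then obtain v where v: "v \<in> edge y" and \<beta>: "\<beta> = label y v" by blast
  have "sum extension ((outcomes x \<times> {(y, \<beta>)}) \<inter> allowed)
      = sum (extension \<circ> (\<lambda>u. answers x u y v)) {u \<in> edge x. consistent x y u v}"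
    unfolding \<beta> col_allowed[OF x y v]
    by (rule sum.reindex, rule inj_on_subset[OF inj_on_answers_left[OF x]]) blast
  also have "\<dots> = sum (joint y x v) {u \<in> edge x. consistent y x v u}"
    using extension_answers[OF x y _ v] by (intro sum.cong) (auto simp: joint_sym consistent_sym)
  finally show ?thesis using joint_row_sum[OF y x v] marginal_label[OF y v] \<beta> by simp
next
  case False
  have "snd w \<noteq> (y, \<beta>)" if "w \<in> allowed" for w
    using that False by (auto simp: answers_def elim!: allowedE)
  then have "(outcomes x \<times> {(y, \<beta>)}) \<inter> allowed = {}" by fastforce
  then show ?thesis using marginal_unlabelled[OF False] by simp
qed

lemma sum_marginal_outcomes:
  assumes x: "x \<in> {1..m}"
  shows "sum marginal (outcomes x) = 1"
proof -
  have "sum marginal (outcomes x) = sum marginal ((\<lambda>u. (x, label x u)) ` edge x)"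
    using label_range[OF x] by (intro sum.mono_neutral_right) (auto simp: outcomes_def marginal_def)
  also have "\<dots> = sum q (edge x)"
    using label_inj[OF x] by (simp add: sum.reindex inj_on_def marginal_label[OF x])
  finally show ?thesis using sum_q_edge[OF x] by simp
qed

lemma prob_model_extension: "prob_model (bell_game m d game_rule) extension"
  unfolding bell_game_eq
proof (rule prob_model_induced_fr_prodI[where \<mu>A = marginal and \<mu>B = marginal])
  show "finite allowed" by (rule finite_allowed)
  show "0 \<le> extension w \<and> extension w \<le> 1" if "w \<in> allowed" for w
    using that by (auto elim!: allowedE simp: extension_answers joint_nonneg_le_one)
  show "sum marginal eA = 1" if "eA \<in> edges (party m d)" for eA
    using that sum_marginal_outcomes by (auto simp: edges_party)
  show "sum marginal eB = 1" if "eB \<in> edges (party m d)" for eB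
    using that sum_marginal_outcomes by (auto simp: edges_party)
  show "sum extension (({a} \<times> eB) \<inter> allowed) = marginal a"
    if "eA \<in> edges (party m d)" "a \<in> eA" "eB \<in> edges (party m d)" for eA a eB
    using that extension_row_sum by (auto simp: edges_party outcomes_def)
  show "sum extension ((eA \<times> {b}) \<inter> allowed) = marginal b"
    if "eB \<in> edges (party m d)" "b \<in> eB" "eA \<in> edges (party m d)" for eB b eA
    using that extension_col_sum by (auto simp: edges_party outcomes_def)
qed

lemma extension_embedding: "v \<in> verts H \<Longrightarrow> extension (embedding v) = q v"
  using edge_of[of v] by (simp add: embedding_def extension_answers joint_def)

end

lemma cond_ctx_bell_game: "cond_ctx H (bell_game m d game_rule)"
  unfolding cond_ctx_def
proof (intro exI[of _ embedding] conjI allI impI)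
  show "inj_on embedding (verts H)" by (rule inj_on_embedding)
  show "embedding ` verts H \<subseteq> verts (bell_game m d game_rule)"
    using embedding_allowed by (auto simp: bell_game_eq)
  show "prob_model H (p \<circ> embedding)" if "prob_model (bell_game m d game_rule) p" for p
    using that by (rule prob_model_comp_embedding)
  show "\<exists>p. prob_model (bell_game m d game_rule) p \<and> (\<forall>v\<in>verts H. p (embedding v) = q v)"
    if "prob_model H q" for q
    using prob_model_extension[OF that] extension_embedding[OF that] by blast
qed

end

lemma ex_edge_labelling:
  assumes H: "ctx_scenario H"
  shows "\<exists>edge label. edge_labelling H (card (edges H)) (Max (card ` edges H)) edge label"
proof -
  let ?m = "card (edges H)" and ?d = "Max (card ` edges H)"
  have fin_edges: "finite (edges H)" and fin_e: "\<And>e. e \<in> edges H \<Longrightarrow> finite e"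
    using H by (auto simp: ctx_scenario_def dest: finite_UnionD intro: finite_subset)
  obtain edge where edge: "bij_betw edge {1..?m} (edges H)"
    using ex_bij_betw_nat_finite_1[OF fin_edges] by blast
  have "\<exists>f. f ` e \<subseteq> {1..?d} \<and> inj_on f e" if "e \<in> edges H" for e
  proof -
    have "card e \<le> ?d" using fin_edges that by simp
    then show ?thesis using card_le_inj[OF fin_e[OF that], of "{1..?d}"] by simp
  qed
  then obtain lab where lab: "\<And>e. e \<in> edges H \<Longrightarrow> lab e ` e \<subseteq> {1..?d} \<and> inj_on (lab e) e"
    by metis
  have "edge_labelling H ?m ?d edge (\<lambda>x. lab (edge x))"
  proof
    show "ctx_scenario H" by (rule H)
    show "edges H = edge ` {1..?m}" using edge by (simp add: bij_betw_def)
    show "inj_on (lab (edge x)) (edge x)" if "x \<in> {1..?m}" for x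
      using lab[OF bij_betw_apply[OF edge that]] by blast
    show "lab (edge x) u \<in> {1..?d}" if "x \<in> {1..?m}" "u \<in> edge x" for x u
      using lab[OF bij_betw_apply[OF edge that(1)]] that(2) by blast
  qed
  then show ?thesis by blast
qed

theorem theorem4p1:
  fixes H :: "'v hypergraph"
  assumes "ctx_scenario H"
    and "edges H \<noteq> {}"
  shows "\<exists>r. is_rule (party (card (edges H)) (Max (card ` edges H)))
                     (party (card (edges H)) (Max (card ` edges H))) r \<and>
             cond_ctx H (bell_game (card (edges H)) (Max (card ` edges H)) r)"
proof -
  obtain edge label where "edge_labelling H (card (edges H)) (Max (card ` edges H)) edge label"
    using ex_edge_labelling[OF assms(1)] by blast
  then interpret edge_labelling H "card (edges H)" "Max (card ` edges H)" edge label .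
  show ?thesis using is_rule_game_rule cond_ctx_bell_game by blast
qed

end
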